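(* Let $\tau_0,\tau_1,\dots,\tau_r$ ($1\le r\le n$) be $\mathbb Z$-linearly independent elements of $G_t$ such that $\tau_0\in G_t\setminus G$ and $\tau_1,\dots,\tau_r\in G$. Then there exists a $\mathbb K$-automorphism $\varphi$ of $\mathbb K(t,\mathbf x)$ such that $\varphi\circ\tau_0=\sigma_t\circ\varphi$ and $\varphi\circ\tau_i=\sigma_{x_i}\circ\varphi$ for all $i=1,\dots,r$. Furthermore, for any $f\in\mathbb K(t,\mathbf x)$, $f$ has a telescoper of type $(\tau_0;\tau_1,\dots,\tau_r)$ if and only if $\varphi(f)$ has a telescoper of type $(\sigma_t;\sigma_{x_1},\dots,\sigma_{x_r})$.
   Context: $\mathbb K$ is a field of characteristic zero, $\mathbf x=(x_1,\dots,x_m)$, $1\le n\le m$; $\sigma_t,\sigma_{x_i}$ are the $\mathbb K$-automorphisms of $\mathbb K(t,\mathbf x)$ shifting $t$, resp. $x_i$, by $1$ and fixing the other variables. $G=\langle\sigma_{x_1},\dots,\sigma_{x_n}\rangle$, $G_t=\langle\sigma_t,\sigma_{x_1},\dots,\sigma_{x_n}\rangle$. Elements are $\mathbb Z$-linearly independent if $\tau_0^{c_0}\cdots\tau_r^{c_r}=\mathbf 1$ with $c_i\in\mathbb Z$ forces all $c_i=0$. For $\tau\in G_t$, $\Delta_\tau(g)=\tau(g)-g$; $g$ is $(\tau_1,\dots,\tau_r)$-summable in $\mathbb K(t,\mathbf x)$ if $g=\sum_{i=1}^r\Delta_{\tau_i}(h_i)$ with $h_i\in\mathbb K(t,\mathbf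 x)$. For $\tau_0\in G_t\setminus G$ (i.e. $\tau_0$ involves a nonzero power of $\sigma_t$), a telescoper of type $(\tau_0;\tau_1,\dots,\tau_r)$ for $f$ is a nonzero operator $L=\sum_{\ell=0}^\rho e_\ell T_0^\ell$ with $e_\ell\in\mathbb K(t)$, where $T_0$ acts as $\tau_0$, such that $L(f):=\sum_\ell e_\ell\tau_0^\ell(f)$ is $(\tau_1,\dots,\tau_r)$-summable in $\mathbb K(t,\mathbf x)$; a telescoper of type $(\sigma_t;\sigma_{x_1},\dots,\sigma_{x_r})$ is the special case $\tau_0=\sigma_t$, $\tau_i=\sigma_{x_i}$. *)

theory Defs
  imports "HOL-Library.Poly_Mapping" "HOL-Computational_Algebra.Fraction_Field"
begin

text \<open>Multivariate polynomials over 'k in the variables indexed by nat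
  (variable 0 = t, variable i = x_i for i \<ge> 1), as finitely supported maps
  from monomials (exponent vectors) to coefficients.\<close>
type_synonym 'k kpoly = "(nat \<Rightarrow>\<^sub>0 nat) \<Rightarrow>\<^sub>0 'k"

type_synonym 'k krat = "'k kpoly fract"

definition Var :: "nat \<Rightarrow> 'k::field kpoly" where
  "Var j = Poly_Mapping.single (Poly_Mapping.single j 1) 1"

definition constp :: "'k::field \<Rightarrow> 'k kpoly" where
  "constp c = Poly_Mapping.single 0 c"

definition vars :: "'k::field kpoly \<Rightarrow> nat set" where
  "vars p = \<Union> (Poly_Mapping.keys ` Poly_Mapping.keys p)"

text \<open>The field K(t, x_1, ..., x_m) as a subset of the rational functions:
  quotients of polynomials involving only the variables 0..m.\<close>
definition RF :: "nat \<Rightarrow> 'k::field krat set" where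
  "RF m = {q. \<exists>a b. b \<noteq> 0 \<and> q = Fract a b \<and> vars a \<subseteq> {0..m} \<and> vars b \<subseteq> {0..m}}"

abbreviation Kt :: "'k::field krat set" where
  "Kt \<equiv> RF 0"

definition constf :: "'k::field \<Rightarrow> 'k krat" where
  "constf c = Fract (constp c) 1"

definition shiftp :: "(nat \<Rightarrow> int) \<Rightarrow> 'k::field kpoly \<Rightarrow> 'k kpoly" where
  "shiftp v p = (\<Sum>mn \<in> Poly_Mapping.keys p. constp (Poly_Mapping.lookup p mn) *
      (\<Prod>j \<in> Poly_Mapping.keys mn. (Var j + constp (of_int (v j))) ^ Poly_Mapping.lookup mn j))"

text \<open>The automorphism of the rational function field associated with the
  element sigma_t^(v 0) sigma_x1^(v 1) ... of G_t, given by its exponent vector v.\<close>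
definition shiftf :: "(nat \<Rightarrow> int) \<Rightarrow> 'k::field krat \<Rightarrow> 'k krat" where
  "shiftf v q = (case SOME ab. snd ab \<noteq> 0 \<and> q = Fract (fst ab) (snd ab) of
      (a, b) \<Rightarrow> Fract (shiftp v a) (shiftp v b))"

text \<open>Unit exponent vector: sigma_t is unitv 0, sigma_{x_i} is unitv i.\<close>
definition unitv :: "nat \<Rightarrow> nat \<Rightarrow> int" where
  "unitv i = (\<lambda>j. if j = i then 1 else 0)"

definition K_automorphism :: "nat \<Rightarrow> ('k::field krat \<Rightarrow> 'k krat) \<Rightarrow> bool" where
  "K_automorphism m \<phi> \<longleftrightarrow> bij_betw \<phi> (RF m) (RF m) \<and>
     (\<forall>a\<in>RF m. \<forall>b\<in>RF m. \<phi> (a + b) = \<phi> a + \<phi> b \<and> \<phi> (a * b) = \<phi> a * \<phi> b) \<and>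
     (\<forall>c. \<phi> (constf c) = constf c)"

definition summable_in :: "nat \<Rightarrow> nat \<Rightarrow> (nat \<Rightarrow> nat \<Rightarrow> int) \<Rightarrow> 'k::field krat \<Rightarrow> bool" where
  "summable_in m r tau g \<longleftrightarrow>
     (\<exists>h :: nat \<Rightarrow> 'k krat. (\<forall>i\<in>{1..r}. h i \<in> RF m) \<and>
        g = (\<Sum>i=1..r. shiftf (tau i) (h i) - h i))"

definition has_telescoper :: "nat \<Rightarrow> nat \<Rightarrow> (nat \<Rightarrow> nat \<Rightarrow> int) \<Rightarrow> 'k::field krat \<Rightarrow> bool" where
  "has_telescoper m r tau f \<longleftrightarrow>
     (\<exists>(\<rho>::nat) (e :: nat \<Rightarrow> 'k krat).
        (\<forall>l\<le>\<rho>. e l \<in> Kt) \<and> (\<exists>l\<le>\<rho>. e l \<noteq> 0) \<and>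
        summable_in m r tau (\<Sum>l\<le>\<rho>. e l * (shiftf (tau 0) ^^ l) f))"

end

(* Write tau_i as the shift by an integer exponent vector w_i.  Integer independence of
   w_1, ..., w_r implies rational independence (clear denominators), and these vectors lie in
   the hyperplane y_0 = 0; extend them to a basis w_1, ..., w_m of it and add w_0, whose
   t-coordinate is nonzero.  The matrix A with columns w_0, ..., w_m is invertible, and the
   linear change of variables x |-> A x is a K-automorphism phi with phi o shift(A u) =
   shift(u) o phi, so it conjugates tau_i to the i-th unit shift.  Since A maps t to a multiple
   of t, phi and its inverse preserve K(t); conjugating a telescoper and its summability
   certificate by phi therefore gives a telescoper of the other type, and vice versa. *)

theory Submission
  imports HOL.Rat HOL.Vector_Spaces "HOL-Library.Function_Algebras" Defs
begin

lemma constp_add: "constp (a + b) = constp a + (constp b :: 'k::field kpoly)"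
  by (simp add: constp_def single_add)

lemma constp_mult: "constp (a * b) = constp a * (constp b :: 'k::field kpoly)"
  by (simp add: constp_def mult_single)

lemma constp_0 [simp]: "constp 0 = (0 :: 'k::field kpoly)"
  by (simp add: constp_def)

lemma constp_1 [simp]: "constp 1 = (1 :: 'k::field kpoly)"
  by (simp add: constp_def)

lemma constp_sum: "constp (sum f A) = (\<Sum>x\<in>A. constp (f x) :: 'k::field kpoly)"
  by (induction A rule: infinite_finite_induct) (auto simp: constp_add)

lemma poly_mapping_sum_single:
  "p = (\<Sum>k\<in>Poly_Mapping.keys p. Poly_Mapping.single k (Poly_Mapping.lookup p k))"
  by (rule poly_mapping_eqI)
     (auto simp: lookup_sum lookup_single when_def in_keys_iff sum.delta' split: if_splits)

definition subst_monom :: "(nat \<Rightarrow> 'k::field kpoly) \<Rightarrow> (nat \<Rightarrow>\<^sub>0 nat) \<Rightarrow> 'k kpoly" where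
  "subst_monom s mn = (\<Prod>j \<in> Poly_Mapping.keys mn. s j ^ Poly_Mapping.lookup mn j)"

definition poly_subst :: "(nat \<Rightarrow> 'k::field kpoly) \<Rightarrow> 'k kpoly \<Rightarrow> 'k kpoly" where
  "poly_subst s p = (\<Sum>mn \<in> Poly_Mapping.keys p. constp (Poly_Mapping.lookup p mn) * subst_monom s mn)"

lemma shiftp_eq_poly_subst: "shiftp v = poly_subst (\<lambda>j. Var j + constp (of_int (v j)))"
  by (simp add: fun_eq_iff shiftp_def poly_subst_def subst_monom_def)

lemma subst_monom_superset:
  assumes "finite S" "Poly_Mapping.keys mn \<subseteq> S"
  shows "subst_monom s mn = (\<Prod>j\<in>S. s j ^ Poly_Mapping.lookup mn j)"
  unfolding subst_monom_def
  by (rule prod.mono_neutral_left) (use assms in \<open>auto simp: in_keys_iff\<close>)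

lemma subst_monom_add: "subst_monom s (a + b) = subst_monom s a * subst_monom s b"
proof -
  let ?S = "Poly_Mapping.keys a \<union> Poly_Mapping.keys b"
  have "subst_monom s (a + b) = (\<Prod>j\<in>?S. s j ^ Poly_Mapping.lookup (a + b) j)"
    by (rule subst_monom_superset[OF _ keys_add]) simp
  also have "\<dots> = (\<Prod>j\<in>?S. s j ^ Poly_Mapping.lookup a j) * (\<Prod>j\<in>?S. s j ^ Poly_Mapping.lookup b j)"
    unfolding lookup_add power_add prod.distrib ..
  also have "\<dots> = subst_monom s a * subst_monom s b"
    using subst_monom_superset[of ?S a s] subst_monom_superset[of ?S b s] by simp
  finally show ?thesis .
qed

lemma poly_subst_superset:
  assumes "finite S" "Poly_Mapping.keys p \<subseteq> S"
  shows "poly_subst s p = (\<Sum>mn\<in>S. constp (Poly_Mapping.lookup p mn) * subst_monom s mn)"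
  unfolding poly_subst_def
  by (rule sum.mono_neutral_left) (use assms in \<open>auto simp: in_keys_iff\<close>)

lemma poly_subst_add: "poly_subst s (p + q) = poly_subst s p + poly_subst s q"
proof -
  let ?S = "Poly_Mapping.keys p \<union> Poly_Mapping.keys q"
  have "poly_subst s (p + q) = (\<Sum>mn\<in>?S. constp (Poly_Mapping.lookup (p + q) mn) * subst_monom s mn)"
    by (rule poly_subst_superset[OF _ keys_add]) simp
  also have "\<dots> = poly_subst s p + poly_subst s q"
    by (simp add: poly_subst_superset[of ?S] lookup_add constp_add distrib_right sum.distrib)
  finally show ?thesis .
qed

lemma poly_subst_0 [simp]: "poly_subst s 0 = 0"
  by (simp add: poly_subst_def)

lemma poly_subst_sum: "poly_subst s (sum f A) = (\<Sum>x\<in>A. poly_subst s (f x))"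
  by (induction A rule: infinite_finite_induct) (auto simp: poly_subst_add)

lemma poly_subst_single: "poly_subst s (Poly_Mapping.single a c) = constp c * subst_monom s a"
  by (simp add: poly_subst_def)

lemma poly_subst_mult: "poly_subst s (p * q) = poly_subst s p * poly_subst s q"
proof -
  have "p * q = (\<Sum>a\<in>Poly_Mapping.keys p. \<Sum>b\<in>Poly_Mapping.keys q.
        Poly_Mapping.single (a + b) (Poly_Mapping.lookup p a * Poly_Mapping.lookup q b))"
    by (subst (1 2) poly_mapping_sum_single) (simp add: sum_product mult_single)
  then show ?thesis
    by (simp add: poly_subst_sum poly_subst_single constp_mult subst_monom_add mult_ac
        poly_subst_def[of s p] poly_subst_def[of s q] sum_product)
qed

lemma poly_subst_constp [simp]: "poly_subst s (constp c) = constp c"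
  by (simp add: constp_def poly_subst_single subst_monom_def)

lemma poly_subst_1 [simp]: "poly_subst s 1 = 1"
  using poly_subst_constp[of s 1] by simp

lemma poly_subst_Var [simp]: "poly_subst s (Var j) = s j"
  by (simp add: Var_def poly_subst_single subst_monom_def)

lemma poly_subst_power: "poly_subst s (p ^ k) = poly_subst s p ^ k"
  by (induction k) (auto simp: poly_subst_mult)

lemma poly_subst_prod: "poly_subst s (prod f A) = (\<Prod>x\<in>A. poly_subst s (f x))"
  by (induction A rule: infinite_finite_induct) (auto simp: poly_subst_mult)

lemma poly_subst_poly_subst: "poly_subst s (poly_subst u p) = poly_subst (\<lambda>j. poly_subst s (u j)) p"
  by (simp add: poly_subst_def[of u] poly_subst_sum poly_subst_mult poly_subst_prod poly_subst_power
      subst_monom_def) (simp add: poly_subst_def subst_monom_def)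

lemma Var_power: "Var j ^ k = (Poly_Mapping.single (Poly_Mapping.single j k) 1 :: 'k::field kpoly)"
proof (induction k)
  case (Suc k)
  have "Var j ^ Suc k = Poly_Mapping.single (Poly_Mapping.single j k) 1 * (Var j :: 'k kpoly)"
    by (simp add: Suc mult.commute)
  also have "\<dots> = Poly_Mapping.single (Poly_Mapping.single j k + Poly_Mapping.single j 1) 1"
    by (simp add: Var_def mult_single)
  finally
  show ?case by (simp add: single_add[symmetric])
qed simp

lemma subst_monom_Var: "subst_monom Var a = (Poly_Mapping.single a 1 :: 'k::field kpoly)"
proof -
  have "(\<Prod>j\<in>S. (Var j :: 'k kpoly) ^ Poly_Mapping.lookup a j) =
      Poly_Mapping.single (\<Sum>j\<in>S. Poly_Mapping.single j (Poly_Mapping.lookup a j)) 1" if "finite S" for S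
    using that by (induction S rule: finite_induct) (auto simp: Var_power mult_single)
  then show ?thesis
    unfolding subst_monom_def by (simp flip: poly_mapping_sum_single)
qed

lemma poly_subst_Var_id [simp]: "poly_subst Var p = p"
  unfolding poly_subst_def subst_monom_Var
  by (simp add: constp_def mult_single flip: poly_mapping_sum_single)

lemma poly_subst_cong:
  assumes "\<And>j. j \<in> vars p \<Longrightarrow> s j = s' j"
  shows "poly_subst s p = poly_subst s' p"
  unfolding poly_subst_def subst_monom_def
  using assms by (intro sum.cong refl arg_cong[where f="(*) _"] prod.cong) (auto simp: vars_def, metis)

lemma vars_add: "vars (p + q) \<subseteq> vars p \<union> vars q"
  unfolding vars_def using keys_add[of p q] by blast

lemma vars_mult: "vars (p * q) \<subseteq> vars p \<union> vars q"
proof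
  fix j assume "j \<in> vars (p * q)"
  then obtain mn where mn: "mn \<in> Poly_Mapping.keys (p * q)" "j \<in> Poly_Mapping.keys mn"
    unfolding vars_def by blast
  then obtain a b where "mn = a + b" "a \<in> Poly_Mapping.keys p" "b \<in> Poly_Mapping.keys q"
    using keys_mult[of p q] by blast
  with mn(2) keys_add[of a b] show "j \<in> vars p \<union> vars q"
    unfolding vars_def by blast
qed

lemma vars_constp [simp]: "vars (constp c :: 'k::field kpoly) = {}"
  by (simp add: vars_def constp_def)

lemma vars_Var: "vars (Var j :: 'k::field kpoly) \<subseteq> {j}"
  by (simp add: vars_def Var_def)

lemma vars_0 [simp]: "vars 0 = {}"
  by (simp add: vars_def)

lemma vars_1 [simp]: "vars (1 :: 'k::field kpoly) = {}"
  by (simp add: vars_def)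

lemma vars_add_subset: "vars p \<subseteq> V \<Longrightarrow> vars q \<subseteq> V \<Longrightarrow> vars (p + q) \<subseteq> V"
  using vars_add by blast

lemma vars_mult_subset: "vars p \<subseteq> V \<Longrightarrow> vars q \<subseteq> V \<Longrightarrow> vars (p * q) \<subseteq> V"
  using vars_mult by blast

lemma vars_sum_subset: "(\<And>i. i \<in> A \<Longrightarrow> vars (f i) \<subseteq> V) \<Longrightarrow> vars (sum f A) \<subseteq> V"
  by (induction A rule: infinite_finite_induct) (simp_all add: vars_add_subset)

lemma vars_prod_subset:
  "(\<And>i. i \<in> A \<Longrightarrow> vars (f i :: 'k::field kpoly) \<subseteq> V) \<Longrightarrow> vars (prod f A) \<subseteq> V"
  by (induction A rule: infinite_finite_induct) (simp_all add: vars_mult_subset)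

lemma vars_power_subset: "vars (p :: 'k::field kpoly) \<subseteq> V \<Longrightarrow> vars (p ^ k) \<subseteq> V"
  by (induction k) (simp_all add: vars_mult_subset)

lemma vars_poly_subst:
  assumes "\<And>j. j \<in> vars p \<Longrightarrow> vars (s j) \<subseteq> V"
  shows "vars (poly_subst s p) \<subseteq> V"
  unfolding poly_subst_def subst_monom_def
proof (intro vars_sum_subset vars_mult_subset vars_prod_subset vars_power_subset)
  fix mn j assume "mn \<in> Poly_Mapping.keys p" "j \<in> Poly_Mapping.keys mn"
  then show "vars (s j) \<subseteq> V" using assms unfolding vars_def by blast
qed simp

locale ring_embedding =
  fixes h :: "'a::idom \<Rightarrow> 'b::idom"
  assumes hom_add: "h (p + q) = h p + h q"
    and hom_mult: "h (p * q) = h p * h q"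
    and hom_one: "h 1 = 1"
    and hom_nonzero: "p \<noteq> 0 \<Longrightarrow> h p \<noteq> 0"

definition fract_map :: "('a::idom \<Rightarrow> 'b::idom) \<Rightarrow> 'a fract \<Rightarrow> 'b fract" where
  "fract_map h q = (case SOME ab. snd ab \<noteq> 0 \<and> q = Fract (fst ab) (snd ab) of
      (a, b) \<Rightarrow> Fract (h a) (h b))"

lemma shiftf_eq_fract_map: "shiftf v = fract_map (shiftp v)"
  by (simp add: fun_eq_iff shiftf_def fract_map_def)

context ring_embedding
begin

lemma fract_map_Fract:
  assumes "b \<noteq> 0"
  shows "fract_map h (Fract a b) = Fract (h a) (h b)"
proof -
  define ab where "ab = (SOME ab. snd ab \<noteq> 0 \<and> Fract a b = Fract (fst ab) (snd ab))"
  have "snd ab \<noteq> 0 \<and> Fract a b = Fract (fst ab) (snd ab)"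
    unfolding ab_def by (rule someI[of _ "(a, b)"]) (use assms in simp)
  then have nz: "snd ab \<noteq> 0" and "a * snd ab = fst ab * b"
    using eq_fract(1)[OF assms] by auto
  then have "h a * h (snd ab) = h (fst ab) * h b"
    by (simp flip: hom_mult)
  then have "Fract (h (fst ab)) (h (snd ab)) = Fract (h a) (h b)"
    using eq_fract(1)[of "h (snd ab)" "h b"] hom_nonzero nz assms by auto
  then show ?thesis
    unfolding fract_map_def ab_def[symmetric] by (simp add: case_prod_beta)
qed

lemma fract_map_add: "fract_map h (x + y) = fract_map h x + fract_map h y"
  by (cases x; cases y) (simp add: fract_map_Fract hom_nonzero hom_add hom_mult)

lemma fract_map_mult: "fract_map h (x * y) = fract_map h x * fract_map h y"
  by (cases x; cases y) (simp add: fract_map_Fract hom_nonzero hom_mult)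

end

lemma fract_map_inverse:
  assumes "ring_embedding g" "ring_embedding h" "\<And>p. g (h p) = p"
  shows "fract_map g (fract_map h x) = x"
  by (cases x) (simp add: assms ring_embedding.fract_map_Fract ring_embedding.hom_nonzero)

lemma fract_map_commute_on_RF:
  assumes "ring_embedding h1" "ring_embedding h2" "ring_embedding h3" "ring_embedding h4"
    and "\<And>p. vars p \<subseteq> {0..m} \<Longrightarrow> h1 (h2 p) = h3 (h4 p)"
    and "x \<in> RF m"
  shows "fract_map h1 (fract_map h2 x) = fract_map h3 (fract_map h4 x)"
proof -
  from \<open>x \<in> RF m\<close> obtain a b where "b \<noteq> 0" "x = Fract a b" "vars a \<subseteq> {0..m}" "vars b \<subseteq> {0..m}"
    unfolding RF_def by blast
  then show ?thesis
    using assms(1-5) by (simp add: ring_embedding.fract_map_Fract ring_embedding.hom_nonzero)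
qed

lemma fract_map_RF:
  assumes "ring_embedding h" "\<And>p. vars p \<subseteq> {0..k} \<Longrightarrow> vars (h p) \<subseteq> {0..k}" "x \<in> RF k"
  shows "fract_map h x \<in> RF k"
proof -
  from \<open>x \<in> RF k\<close> obtain a b where "b \<noteq> 0" "x = Fract a b" "vars a \<subseteq> {0..k}" "vars b \<subseteq> {0..k}"
    unfolding RF_def by blast
  with assms(1,2) show ?thesis
    unfolding RF_def
    by (intro CollectI exI[of _ "h a"] exI[of _ "h b"])
       (simp add: ring_embedding.fract_map_Fract ring_embedding.hom_nonzero)
qed

lemma fract_map_constf:
  assumes "ring_embedding h" "h (constp c) = constp c"
  shows "fract_map h (constf c) = constf c"
  using assms by (simp add: constf_def ring_embedding.fract_map_Fract ring_embedding.hom_one)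

lemma ring_embedding_poly_subst:
  assumes "\<And>j. poly_subst s' (s j) = Var j"
  shows "ring_embedding (poly_subst s)"
proof -
  have "poly_subst s' (poly_subst s p) = p" for p
    by (simp add: poly_subst_poly_subst assms)
  then show ?thesis
    by unfold_locales (simp_all add: poly_subst_add poly_subst_mult, metis poly_subst_0)
qed

lemma ring_embedding_shiftp: "ring_embedding (shiftp v :: 'k::field kpoly \<Rightarrow> _)"
  unfolding shiftp_eq_poly_subst
  by (rule ring_embedding_poly_subst[where s'="\<lambda>j. Var j + constp (of_int (- v j))"])
     (simp add: poly_subst_add flip: constp_add)

lemma shiftf_RF: "x \<in> RF m \<Longrightarrow> shiftf v x \<in> RF m"
  unfolding shiftf_eq_fract_map
proof (rule fract_map_RF[OF ring_embedding_shiftp])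
  fix p :: "'k::field kpoly"
  assume "vars p \<subseteq> {0..m}"
  then show "vars (shiftp v p) \<subseteq> {0..m}"
    unfolding shiftp_eq_poly_subst
    by (intro vars_poly_subst vars_add_subset) (use vars_Var in auto)
qed

definition qscale :: "rat \<Rightarrow> (nat \<Rightarrow> rat) \<Rightarrow> nat \<Rightarrow> rat" where
  "qscale c v = (\<lambda>j. c * v j)"

lemma qscale_apply [simp]: "qscale c v j = c * v j"
  by (simp add: qscale_def)

interpretation qvec: vector_space qscale
  by unfold_locales (simp_all add: fun_eq_iff qscale_def algebra_simps)

lemma sum_fun_apply: "(sum f A :: nat \<Rightarrow> rat) j = (\<Sum>k\<in>A. f k j)"
  by (induction A rule: infinite_finite_induct) simp_all

definition qunit :: "nat \<Rightarrow> nat \<Rightarrow> rat" where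
  "qunit k = (\<lambda>j. if j = k then 1 else 0)"

definition coord_hyperplane :: "nat \<Rightarrow> (nat \<Rightarrow> rat) set" where
  "coord_hyperplane m = {y. y 0 = 0 \<and> (\<forall>j>m. y j = 0)}"

lemma inj_qunit: "inj qunit"
  by (rule injI) (metis qunit_def zero_neq_one)

lemma sum_qunit_apply:
  "finite S \<Longrightarrow> (\<Sum>k\<in>S. qscale (u k) (qunit k)) j = (if j \<in> S then u j else 0)"
  by (simp add: sum_fun_apply qunit_def if_distrib[of "(*) _"] sum.delta cong: if_cong)

lemma independent_qunit: "finite S \<Longrightarrow> qvec.independent (qunit ` S)"
proof (rule qvec.independent_if_scalars_zero)
  fix u v
  assume "finite S" "(\<Sum>x\<in>qunit ` S. qscale (u x) x) = 0" "v \<in> qunit ` S"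
  then obtain k where "k \<in> S" "v = qunit k" "(\<Sum>k\<in>S. qscale (u (qunit k)) (qunit k)) = 0"
    by (auto simp: sum.reindex[OF inj_on_subset[OF inj_qunit]])
  then show "u v = 0"
    using sum_qunit_apply[OF \<open>finite S\<close>, of "u \<circ> qunit" k] by simp
qed simp

lemma span_qunit: "qvec.span (qunit ` {1..m}) = coord_hyperplane m"
proof (rule qvec.span_subspace)
  show "qunit ` {1..m} \<subseteq> coord_hyperplane m"
    by (auto simp: coord_hyperplane_def qunit_def)
  show "coord_hyperplane m \<subseteq> qvec.span (qunit ` {1..m})"
  proof
    fix y assume "y \<in> coord_hyperplane m"
    then have "y = (\<Sum>k\<in>{1..m}. qscale (y k) (qunit k))"
      by (auto simp: fun_eq_iff sum_qunit_apply coord_hyperplane_def not_le)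
    also have "\<dots> \<in> qvec.span (qunit ` {1..m})"
      by (intro qvec.span_sum qvec.span_scale qvec.span_base) auto
    finally show "y \<in> qvec.span (qunit ` {1..m})" .
  qed
  show "qvec.subspace (coord_hyperplane m)"
    by (auto simp: qvec.subspace_def coord_hyperplane_def)
qed

lemma (in vector_space) independent_family_if_scalars_zero:
  assumes "finite I" and zero: "\<And>c. (\<Sum>i\<in>I. c i *s w i) = 0 \<Longrightarrow> \<forall>i\<in>I. c i = 0"
  shows "inj_on w I" "independent (w ` I)"
proof -
  show inj: "inj_on w I"
  proof (rule inj_onI, rule ccontr)
    fix i i' assume i: "i \<in> I" "i' \<in> I" "w i = w i'" "i \<noteq> i'"
    define c :: "_ \<Rightarrow> 'a" where "c = (\<lambda>k. if k = i then 1 else if k = i' then -1 else 0)"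
    have "(\<Sum>k\<in>I. c k *s w k) = (\<Sum>k\<in>I. (if k = i then w k else 0) - (if k = i' then w k else 0))"
      by (rule sum.cong) (use i(4) in \<open>auto simp: c_def\<close>)
    also have "\<dots> = 0"
      using i \<open>finite I\<close> by (simp add: sum_subtractf sum.delta')
    finally have "c i = 0"
      using zero i(1) by blast
    then show False
      by (simp add: c_def)
  qed
  show "independent (w ` I)"
  proof (rule independent_if_scalars_zero)
    fix u v assume "(\<Sum>x\<in>w ` I. u x *s x) = 0" "v \<in> w ` I"
    then show "u v = 0"
      using zero[of "u \<circ> w"] by (auto simp: sum.reindex[OF inj])
  qed (use \<open>finite I\<close> in simp)
qed

lemma card_hyperplane_basis:
  assumes "B \<subseteq> coord_hyperplane m" "qvec.independent B" "coord_hyperplane m \<subseteq> qvec.span B"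
  shows "finite B" "card B = m"
proof -
  let ?E = "qunit ` {1..m}"
  have E: "finite ?E" "card ?E = m" "qvec.independent ?E"
    by (simp_all add: card_image inj_on_subset[OF inj_qunit] independent_qunit)
  have "finite B \<and> card B \<le> card ?E"
    by (rule qvec.independent_span_bound[OF E(1) assms(2)]) (use assms(1) span_qunit in blast)
  moreover have "?E \<subseteq> qvec.span B"
    using assms(3) qvec.span_superset[of ?E] span_qunit by blast
  ultimately show "finite B" "card B = m"
    using qvec.independent_span_bound[OF _ E(3)] E(2) by (metis le_antisym)+
qed

lemma hyperplane_basis_extension:
  assumes "r \<le> m" "w ` {1..r} \<subseteq> coord_hyperplane m"
    and inj: "inj_on w {1..r}" and indep: "qvec.independent (w ` {1..r})"
  obtains b where "\<forall>i\<le>r. b i = w i" "b ` {1..m} \<subseteq> coord_hyperplane m" "inj_on b {1..m}"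
    "qvec.independent (b ` {1..m})" "coord_hyperplane m \<subseteq> qvec.span (b ` {1..m})"
proof -
  let ?W = "w ` {1..r}"
  obtain B where B: "?W \<subseteq> B" "B \<subseteq> coord_hyperplane m" "qvec.independent B"
    "coord_hyperplane m \<subseteq> qvec.span B"
    using qvec.maximal_independent_subset_extend[OF assms(2) indep] by blast
  have "finite B" "card B = m"
    using card_hyperplane_basis[OF B(2-4)] by simp_all
  moreover have "card ?W = r"
    using card_image[OF inj] by simp
  ultimately have "card (B - ?W) = card {r+1..m}"
    using B(1) by (simp add: card_Diff_subset finite_subset)
  then obtain g where g: "bij_betw g {r+1..m} (B - ?W)"
    using \<open>finite B\<close> by (metis bij_betw_iff_card finite_Diff finite_atLeastAtMost)
  define b where "b k = (if k \<le> r then w k else g k)" for k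
  have "bij_betw b {1..r} ?W"
    using bij_betw_imageI[OF inj refl] by (rule bij_betw_cong[THEN iffD1, rotated]) (simp add: b_def)
  moreover have "bij_betw b {r+1..m} (B - ?W)"
    using g by (rule bij_betw_cong[THEN iffD1, rotated]) (simp add: b_def)
  ultimately have "bij_betw b ({1..r} \<union> {r+1..m}) (?W \<union> (B - ?W))"
    by (rule bij_betw_combine) blast
  moreover have "{1..r} \<union> {r+1..m} = {1..m}" "?W \<union> (B - ?W) = B"
    using assms(1) B(1) by auto
  ultimately have "bij_betw b {1..m} B"
    by simp
  then have "b ` {1..m} = B" "inj_on b {1..m}"
    by (simp_all add: bij_betw_def)
  show thesis
  proof (rule that)
    show "\<forall>i\<le>r. b i = w i"
      by (simp add: b_def)
  qed (use B \<open>b ` {1..m} = B\<close> \<open>inj_on b {1..m}\<close> in auto)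
qed

locale inverse_matrices =
  fixes m :: nat and A B :: "nat \<Rightarrow> nat \<Rightarrow> rat"
  assumes right_inverse: "\<forall>j\<le>m. \<forall>l\<le>m. (\<Sum>k\<le>m. A j k * B k l) = (if j = l then 1 else 0)"
    and left_inverse: "\<forall>j\<le>m. \<forall>l\<le>m. (\<Sum>k\<le>m. B j k * A k l) = (if j = l then 1 else 0)"

lemma (in inverse_matrices) inverse_matrices_swap: "inverse_matrices m B A"
  by unfold_locales (simp_all add: left_inverse right_inverse)

text \<open>The columns \<open>b 0, \<dots>, b m\<close> of the change-of-variables matrix: \<open>b 1, \<dots>, b m\<close> is a basis
  of the hyperplane \<open>y 0 = 0\<close> and \<open>b 0\<close> is transversal to it.\<close>

locale adapted_basis =
  fixes m :: nat and b :: "nat \<Rightarrow> nat \<Rightarrow> rat"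
  assumes transversal: "b 0 0 \<noteq> 0" "\<forall>j>m. b 0 j = 0"
    and in_hyperplane: "b ` {1..m} \<subseteq> coord_hyperplane m"
    and inj_basis: "inj_on b {1..m}"
    and independent_basis: "qvec.independent (b ` {1..m})"
    and spanning: "coord_hyperplane m \<subseteq> qvec.span (b ` {1..m})"
begin

lemma sum_reindex_basis: "(\<Sum>v\<in>b ` {1..m}. f v) = (\<Sum>k\<in>{1..m}. f (b k))"
  using sum.reindex[OF inj_basis] by simp

lemma basis_in_hyperplane: "k \<in> {1..m} \<Longrightarrow> b k 0 = 0 \<and> (\<forall>j>m. b k j = 0)"
  using in_hyperplane unfolding coord_hyperplane_def by blast

lemma sum_split_0: "(\<Sum>k\<le>m. f k) = f 0 + (\<Sum>k\<in>{1..m}. f k)"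
  by (simp add: atMost_atLeast0 sum.atLeast_Suc_atMost)

lemma basis_expansion_exists:
  assumes "\<forall>j>m. y j = 0"
  obtains c where "y = (\<Sum>k\<le>m. qscale (c k) (b k))"
proof -
  define y' where "y' = y - qscale (y 0 / b 0 0) (b 0)"
  have "y' \<in> coord_hyperplane m"
    using assms transversal by (simp add: y'_def coord_hyperplane_def)
  then obtain u where "y' = (\<Sum>v\<in>b ` {1..m}. qscale (u v) v)"
    using spanning qvec.span_finite[of "b ` {1..m}"] by auto
  then have "y = qscale (y 0 / b 0 0) (b 0) + (\<Sum>k\<in>{1..m}. qscale (u (b k)) (b k))"
    unfolding sum_reindex_basis by (simp add: y'_def diff_eq_eq add.commute)
  then show thesis
    by (intro that[of "\<lambda>k. if k = 0 then y 0 / b 0 0 else u (b k)"]) (simp add: sum_split_0)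
qed

lemma basis_expansion_unique:
  assumes "(\<Sum>k\<le>m. qscale (c k) (b k)) = 0" "k \<le> m"
  shows "c k = 0"
proof -
  have "(\<Sum>k\<le>m. qscale (c k) (b k)) 0 = c 0 * b 0 0"
    by (simp add: sum_fun_apply sum_split_0 basis_in_hyperplane)
  then have c0: "c 0 = 0"
    using assms(1) transversal by simp
  have "(\<Sum>v\<in>b ` {1..m}. qscale (c (inv_into {1..m} b v)) v) = (\<Sum>k\<in>{1..m}. qscale (c k) (b k))"
    unfolding sum_reindex_basis by (rule sum.cong[OF refl]) (metis inv_into_f_f[OF inj_basis])
  also have "\<dots> = 0"
    using assms(1) c0 by (simp add: sum_split_0)
  finally have sum0: "(\<Sum>v\<in>b ` {1..m}. qscale (c (inv_into {1..m} b v)) v) = 0" .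
  have "c (inv_into {1..m} b (b k)) = 0" if "k \<in> {1..m}"
    by (rule qvec.independentD[OF independent_basis _ subset_refl sum0]) (use that in simp_all)
  then show ?thesis
    using c0 assms(2) inv_into_f_f[OF inj_basis] by (cases "k = 0") auto
qed


lemma basis_expansion_eq:
  assumes "(\<Sum>k\<le>m. qscale (c k) (b k)) = (\<Sum>k\<le>m. qscale (d k) (b k))" "k \<le> m"
  shows "c k = d k"
proof -
  have "(\<Sum>k\<le>m. qscale (c k - d k) (b k)) = 0"
    using assms(1) by (simp add: qvec.scale_left_diff_distrib sum_subtractf)
  then show ?thesis
    using basis_expansion_unique[of "\<lambda>k. c k - d k"] assms(2) by simp
qed

lemma basis_support: "k \<le> m \<Longrightarrow> j > m \<Longrightarrow> b k j = 0"
  using transversal basis_in_hyperplane[of k] by (cases "k = 0") auto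

text \<open>The inverse matrix has as its \<open>l\<close>-th column the coordinates of the \<open>l\<close>-th unit vector.\<close>

lemma inverse_matrix_exists:
  obtains B where "inverse_matrices m (\<lambda>j k. b k j) B" "\<forall>l\<in>{1..m}. B 0 l = 0"
proof -
  have "\<forall>l. \<exists>c. l \<le> m \<longrightarrow> qunit l = (\<Sum>k\<le>m. qscale (c k) (b k))"
    by (metis basis_expansion_exists qunit_def not_le)
  then obtain cf where cf: "\<And>l. l \<le> m \<Longrightarrow> qunit l = (\<Sum>k\<le>m. qscale (cf l k) (b k))"
    by metis
  define B where "B k l = cf l k" for k l
  have right: "(\<Sum>k\<le>m. b k j * B k l) = (if j = l then 1 else 0)" if "l \<le> m" for j l
    using arg_cong[OF cf[OF that], of "\<lambda>y. y j"]
    by (simp add: B_def sum_fun_apply qunit_def mult.commute)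
  have left: "(\<Sum>k\<le>m. B j k * b l k) = (if j = l then 1 else 0)" if "j \<le> m" "l \<le> m" for j l
  proof -
    define d where "d k = (\<Sum>i\<le>m. cf i k * b l i)" for k
    have "(\<Sum>k\<le>m. qscale (d k) (b k)) i = (\<Sum>k\<le>m. qscale (if k = l then 1 else 0) (b k)) i" for i
    proof -
      have "(\<Sum>k\<le>m. qscale (d k) (b k)) i = (\<Sum>k\<le>m. \<Sum>i'\<le>m. b l i' * (cf i' k * b k i))"
        unfolding sum_fun_apply qscale_apply d_def sum_distrib_right by (simp add: mult_ac)
      also have "\<dots> = (\<Sum>i'\<le>m. b l i' * (\<Sum>k\<le>m. qscale (cf i' k) (b k)) i)"
        by (subst sum.swap) (simp add: sum_fun_apply sum_distrib_left)
      also have "\<dots> = (\<Sum>i'\<le>m. b l i' * qunit i' i)"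
        by (simp add: cf)
      also have "\<dots> = (\<Sum>i'\<le>m. if i' = i then b l i else 0)"
        by (rule sum.cong) (auto simp: qunit_def)
      also have "\<dots> = b l i"
        using basis_support[OF that(2), of i] by (simp add: not_le)
      finally show ?thesis
        using that(2) by (simp add: sum_fun_apply if_distrib[of "\<lambda>c. c * _"] sum.delta cong: if_cong)
    qed
    then have "d j = (if j = l then 1 else 0)"
      using basis_expansion_eq[of d "\<lambda>k. if k = l then 1 else 0" j] that(1) by (simp add: fun_eq_iff)
    then show ?thesis
      by (simp add: d_def B_def mult.commute)
  qed
  have "B 0 l = 0" if "l \<in> {1..m}" for l
  proof -
    have "0 = (\<Sum>k\<le>m. qscale (cf l k) (b k)) 0"
      using arg_cong[OF cf[of l], of "\<lambda>y. y 0"] that by (simp add: qunit_def)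
    also have "\<dots> = cf l 0 * b 0 0"
      by (simp add: sum_fun_apply sum_split_0 basis_in_hyperplane)
    finally show ?thesis
      using transversal by (simp add: B_def)
  qed
  moreover have "inverse_matrices m (\<lambda>j k. b k j) B"
    by unfold_locales (simp_all add: right left)
  ultimately show thesis
    using that by blast
qed

end


lemma rat_common_denominator:
  fixes c :: "'a \<Rightarrow> rat"
  assumes "finite I"
  obtains d :: int where "d > 0" "\<forall>i\<in>I. of_int d * c i \<in> \<int>"
  using assms
proof (induction I arbitrary: thesis rule: finite_induct)
  case empty
  show ?case
    by (rule empty.prems[of 1]) simp_all
next
  case (insert i I)
  obtain d where d: "d > 0" "\<forall>i\<in>I. of_int d * c i \<in> \<int>"
    using insert.IH by blast
  obtain p q where pq: "quotient_of (c i) = (p, q)"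
    by (cases "quotient_of (c i)")
  then have "q > 0" "of_int q * c i = of_int p"
    using quotient_of_denom_pos[OF pq] quotient_of_div[OF pq] by simp_all
  have "of_int (d * q) * c j \<in> \<int>" if "j \<in> insert i I" for j
  proof (cases "j = i")
    case True
    then show ?thesis
      using \<open>of_int q * c i = of_int p\<close> by (simp add: mult.assoc)
  next
    case False
    then have "of_int (d * q) * c j = of_int q * (of_int d * c j)"
      by simp
    moreover have "of_int d * c j \<in> \<int>"
      using d(2) that False by simp
    ultimately show ?thesis
      by (simp only:) (rule Ints_mult[OF Ints_of_int])
  qed
  with d(1) \<open>q > 0\<close> show ?case
    by (intro insert.prems[of "d * q"]) simp_all
qed

lemma rat_independent_if_int_independent:
  fixes w :: "'a \<Rightarrow> 'b \<Rightarrow> int" and c :: "'a \<Rightarrow> rat"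
  assumes "finite I"
    and int_indep: "\<forall>c :: 'a \<Rightarrow> int. (\<forall>j. (\<Sum>i\<in>I. c i * w i j) = 0) \<longrightarrow> (\<forall>i\<in>I. c i = 0)"
    and "\<forall>j. (\<Sum>i\<in>I. c i * of_int (w i j)) = 0"
  shows "\<forall>i\<in>I. c i = 0"
proof -
  obtain d :: int where d: "d > 0" "\<forall>i\<in>I. of_int d * c i \<in> \<int>"
    using assms(1) by (rule rat_common_denominator)
  define z where "z i = \<lfloor>of_int d * c i\<rfloor>" for i
  have z: "of_int d * c i = of_int (z i)" if "i \<in> I" for i
    using d(2) that unfolding z_def by (auto elim!: Ints_cases)
  have "(of_int (\<Sum>i\<in>I. z i * w i j) :: rat) = of_int d * (\<Sum>i\<in>I. c i * of_int (w i j))" for j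
    by (simp add: sum_distrib_left z flip: mult.assoc cong: sum.cong)
  then have "(\<Sum>i\<in>I. z i * w i j) = 0" for j
    by (metis assms(3) mult_zero_right of_int_eq_0_iff)
  then have "\<forall>i\<in>I. z i = 0"
    using int_indep by blast
  then show ?thesis
    using z d(1) by simp
qed

lemma int_independent_subset:
  fixes w :: "'a \<Rightarrow> 'b \<Rightarrow> int"
  assumes "finite J" "I \<subseteq> J"
    and indep: "\<forall>c :: 'a \<Rightarrow> int. (\<forall>j. (\<Sum>i\<in>J. c i * w i j) = 0) \<longrightarrow> (\<forall>i\<in>J. c i = 0)"
  shows "\<forall>c :: 'a \<Rightarrow> int. (\<forall>j. (\<Sum>i\<in>I. c i * w i j) = 0) \<longrightarrow> (\<forall>i\<in>I. c i = 0)"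
proof (intro allI impI)
  fix c :: "'a \<Rightarrow> int"
  assume "\<forall>j. (\<Sum>i\<in>I. c i * w i j) = 0"
  moreover have "(\<Sum>i\<in>J. (if i \<in> I then c i else 0) * w i j) = (\<Sum>i\<in>I. c i * w i j)" for j
    using sum.inter_restrict[OF assms(1), of "\<lambda>i. c i * w i j" I] assms(2)
    by (simp add: inf.absorb2 if_distrib[of "\<lambda>x. x * _"] cong: if_cong)
  ultimately show "\<forall>i\<in>I. c i = 0"
    using indep[rule_format, of "\<lambda>i. if i \<in> I then c i else 0"] assms(2) by (metis subsetD)
qed

lemma shift_matrices_exist:
  fixes tau :: "nat \<Rightarrow> nat \<Rightarrow> int"
  assumes "r \<le> m" "tau 0 0 \<noteq> 0" "\<forall>i\<le>r. \<forall>j>m. tau i j = 0" "\<forall>i\<in>{1..r}. tau i 0 = 0"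
    and indep: "\<forall>c :: nat \<Rightarrow> int. (\<forall>j. (\<Sum>i\<in>{1..r}. c i * tau i j) = 0) \<longrightarrow> (\<forall>i\<in>{1..r}. c i = 0)"
  obtains A B where "inverse_matrices m A B" "\<forall>i\<le>r. \<forall>j. A j i = of_int (tau i j)"
    "\<forall>k\<in>{1..m}. A 0 k = 0" "\<forall>k\<in>{1..m}. B 0 k = 0"
proof -
  define w where "w i j = (of_int (tau i j) :: rat)" for i j
  have coeffs_zero: "\<forall>i\<in>{1..r}. c i = 0" if "(\<Sum>i\<in>{1..r}. qscale (c i) (w i)) = 0" for c
    using rat_independent_if_int_independent[OF _ indep, of c] that
    by (simp add: w_def fun_eq_iff sum_fun_apply)
  have "w ` {1..r} \<subseteq> coord_hyperplane m"
    using assms(3,4) by (auto simp: w_def coord_hyperplane_def)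
  moreover have "inj_on w {1..r}" "qvec.independent (w ` {1..r})"
    using qvec.independent_family_if_scalars_zero[of "{1..r}" w] coeffs_zero by simp_all
  ultimately obtain b where b: "\<forall>i\<le>r. b i = w i" "b ` {1..m} \<subseteq> coord_hyperplane m"
    "inj_on b {1..m}" "qvec.independent (b ` {1..m})" "coord_hyperplane m \<subseteq> qvec.span (b ` {1..m})"
    by (rule hyperplane_basis_extension[OF assms(1)])
  then interpret adapted_basis m b
    using assms(2,3) by unfold_locales (simp_all add: w_def)
  obtain B where "inverse_matrices m (\<lambda>j k. b k j) B" "\<forall>l\<in>{1..m}. B 0 l = 0"
    by (rule inverse_matrix_exists)
  then show thesis
    using b(1) basis_in_hyperplane by (intro that[of "\<lambda>j k. b k j" B]) (simp_all add: w_def)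
qed

definition lin_subst :: "nat \<Rightarrow> (nat \<Rightarrow> nat \<Rightarrow> rat) \<Rightarrow> nat \<Rightarrow> 'k::field_char_0 kpoly" where
  "lin_subst m X j = (if j \<le> m then (\<Sum>k\<le>m. constp (of_rat (X j k)) * Var k) else Var j)"

definition lin_map :: "nat \<Rightarrow> (nat \<Rightarrow> nat \<Rightarrow> rat) \<Rightarrow> 'k::field_char_0 krat \<Rightarrow> 'k krat" where
  "lin_map m X = fract_map (poly_subst (lin_subst m X))"

lemma vars_constp_mult_Var: "vars (constp c * Var k :: 'k::field kpoly) \<subseteq> {k}"
  using vars_mult[of "constp c" "Var k"] vars_Var[of k] by simp (rule order_trans)

lemma vars_lin_subst: "j \<le> m \<Longrightarrow> vars (lin_subst m X j :: 'k::field_char_0 kpoly) \<subseteq> {0..m}"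
  unfolding lin_subst_def
  by (auto intro!: vars_sum_subset order_trans[OF vars_constp_mult_Var])

lemma vars_lin_subst_0:
  assumes "\<forall>k\<in>{1..m}. X 0 k = 0"
  shows "vars (lin_subst m X 0 :: 'k::field_char_0 kpoly) \<subseteq> {0..0}"
proof -
  have "vars (constp (of_rat (X 0 k)) * Var k :: 'k kpoly) \<subseteq> {0..0}" if "k \<le> m" for k
    using assms that vars_constp_mult_Var[of _ k] by (cases "k = 0") auto
  then show ?thesis
    unfolding lin_subst_def by (auto intro!: vars_sum_subset)
qed

lemma poly_subst_lin_subst_inverse:
  assumes "\<forall>j\<le>m. \<forall>l\<le>m. (\<Sum>k\<le>m. X j k * Y k l) = (if j = l then 1 else 0)"
  shows "poly_subst (lin_subst m Y) (lin_subst m X j :: 'k::field_char_0 kpoly) = Var j"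
proof (cases "j \<le> m")
  case True
  have "poly_subst (lin_subst m Y) (lin_subst m X j :: 'k kpoly)
      = (\<Sum>k\<le>m. constp (of_rat (X j k)) * (\<Sum>l\<le>m. constp (of_rat (Y k l)) * Var l))"
    using True by (simp add: lin_subst_def poly_subst_sum poly_subst_mult)
  also have "\<dots> = (\<Sum>l\<le>m. \<Sum>k\<le>m. constp (of_rat (X j k) * of_rat (Y k l)) * Var l)"
    by (subst sum.swap) (simp add: sum_distrib_left constp_mult mult_ac)
  also have "\<dots> = (\<Sum>l\<le>m. constp (of_rat (\<Sum>k\<le>m. X j k * Y k l)) * Var l)"
    by (simp add: of_rat_sum of_rat_mult constp_sum sum_distrib_right)
  also have "\<dots> = (\<Sum>l\<le>m. if l = j then Var l else 0)"
    by (rule sum.cong) (use True assms in auto)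
  finally show ?thesis
    using True by simp
qed (simp add: lin_subst_def)

lemma poly_subst_lin_subst_shiftp:
  fixes u v :: "nat \<Rightarrow> int"
  assumes "vars p \<subseteq> {0..m}"
    and column: "\<forall>j\<le>m. (\<Sum>k\<le>m. X j k * of_int (u k)) = of_int (v j)"
  shows "poly_subst (lin_subst m X) (shiftp v p)
      = shiftp u (poly_subst (lin_subst m X) p :: 'k::field_char_0 kpoly)"
proof -
  have "shiftp u (lin_subst m X j)
      = poly_subst (lin_subst m X) (Var j + constp (of_int (v j)) :: 'k kpoly)" if "j \<le> m" for j
  proof -
    have "shiftp u (lin_subst m X j :: 'k kpoly)
        = lin_subst m X j + constp (\<Sum>k\<le>m. of_rat (X j k) * of_int (u k))"
      using that by (simp add: lin_subst_def shiftp_eq_poly_subst poly_subst_sum poly_subst_mult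
          poly_subst_add distrib_left sum.distrib constp_sum constp_mult)
    also have "(\<Sum>k\<le>m. of_rat (X j k) * of_int (u k)) = (of_rat (\<Sum>k\<le>m. X j k * of_int (u k)) :: 'k)"
      by (simp add: of_rat_sum of_rat_mult)
    also have "\<dots> = of_int (v j)"
      using column that by simp
    finally show ?thesis
      by (simp add: poly_subst_add)
  qed
  then have "poly_subst (\<lambda>j. poly_subst (lin_subst m X) (Var j + constp (of_int (v j)))) p
      = poly_subst (\<lambda>j. shiftp u (lin_subst m X j)) p"
    using assms(1) by (intro poly_subst_cong) auto
  then show ?thesis
    by (simp add: shiftp_eq_poly_subst poly_subst_poly_subst)
qed

context inverse_matrices
begin

lemma ring_embedding_lin_subst:
  "ring_embedding (poly_subst (lin_subst m A) :: 'k::field_char_0 kpoly \<Rightarrow> _)"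
  by (rule ring_embedding_poly_subst[OF poly_subst_lin_subst_inverse[OF right_inverse]])

lemma lin_map_add: "lin_map m A (x + y) = lin_map m A x + (lin_map m A y :: 'k::field_char_0 krat)"
  unfolding lin_map_def by (rule ring_embedding.fract_map_add[OF ring_embedding_lin_subst])

lemma lin_map_mult: "lin_map m A (x * y) = lin_map m A x * (lin_map m A y :: 'k::field_char_0 krat)"
  unfolding lin_map_def by (rule ring_embedding.fract_map_mult[OF ring_embedding_lin_subst])

lemma lin_map_inverse: "lin_map m B (lin_map m A x) = (x :: 'k::field_char_0 krat)"
  unfolding lin_map_def
  using inverse_matrices.ring_embedding_lin_subst[OF inverse_matrices_swap] ring_embedding_lin_subst
  by (rule fract_map_inverse)
     (simp add: poly_subst_poly_subst poly_subst_lin_subst_inverse[OF right_inverse])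

lemma lin_map_RF: "x \<in> RF m \<Longrightarrow> lin_map m A x \<in> RF (m::nat)"
  unfolding lin_map_def
  by (rule fract_map_RF[OF ring_embedding_lin_subst]) (auto intro!: vars_poly_subst vars_lin_subst)

lemma lin_map_Kt:
  assumes "\<forall>k\<in>{1..m}. A 0 k = 0" "x \<in> Kt"
  shows "lin_map m A x \<in> Kt"
  unfolding lin_map_def
proof (rule fract_map_RF[OF ring_embedding_lin_subst _ assms(2)], rule vars_poly_subst)
  fix p j
  assume "vars p \<subseteq> {0..0}" "j \<in> vars p"
  then have "j = 0" by auto
  then show "vars (lin_subst m A j) \<subseteq> {0..0}"
    using vars_lin_subst_0[of m A] assms(1) by simp
qed

lemma bij_betw_lin_map:
  assumes "lin_map m A ` S \<subseteq> S" "lin_map m B ` S \<subseteq> S"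
  shows "bij_betw (lin_map m A) S S"
  using assms inverse_matrices.lin_map_inverse[OF inverse_matrices_swap]
  by (intro bij_betw_byWitness[of _ "lin_map m B"]) (auto simp: lin_map_inverse)

lemma bij_lin_map: "bij (lin_map m A)"
  using bij_betw_lin_map[of UNIV] by simp

lemma bij_betw_lin_map_RF: "bij_betw (lin_map m A) (RF m) (RF m)"
  using lin_map_RF inverse_matrices.lin_map_RF[OF inverse_matrices_swap]
  by (intro bij_betw_lin_map) auto

lemma bij_betw_lin_map_Kt:
  assumes "\<forall>k\<in>{1..m}. A 0 k = 0" "\<forall>k\<in>{1..m}. B 0 k = 0"
  shows "bij_betw (lin_map m A) Kt Kt"
  using lin_map_Kt[OF assms(1)] inverse_matrices.lin_map_Kt[OF inverse_matrices_swap assms(2)]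
  by (intro bij_betw_lin_map) auto

lemma K_automorphism_lin_map: "K_automorphism m (lin_map m A)"
  unfolding K_automorphism_def
proof (intro conjI ballI allI bij_betw_lin_map_RF)
  show "lin_map m A (constf c) = constf c" for c
    unfolding lin_map_def by (rule fract_map_constf[OF ring_embedding_lin_subst]) simp
qed (simp_all add: lin_map_add lin_map_mult)

lemma lin_map_shiftf:
  fixes u v :: "nat \<Rightarrow> int"
  assumes "\<forall>j\<le>m. (\<Sum>k\<le>m. A j k * of_int (u k)) = of_int (v j)" "g \<in> RF m"
  shows "lin_map m A (shiftf v g) = shiftf u (lin_map m A g :: 'k::field_char_0 krat)"
  unfolding lin_map_def shiftf_eq_fract_map
  by (rule fract_map_commute_on_RF[OF ring_embedding_lin_subst ring_embedding_shiftp
        ring_embedding_shiftp ring_embedding_lin_subst _ assms(2)])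
     (rule poly_subst_lin_subst_shiftp[OF _ assms(1)])


lemma lin_map_shiftf_unitv:
  assumes "i \<le> m" "\<forall>j\<le>m. A j i = of_int (v j)" "g \<in> RF m"
  shows "lin_map m A (shiftf v g) = shiftf (unitv i) (lin_map m A g :: 'k::field_char_0 krat)"
proof (rule lin_map_shiftf[OF _ assms(3)])
  have "(\<Sum>k\<le>m. A j k * of_int (unitv i k)) = (\<Sum>k\<le>m. if k = i then A j i else 0)" for j
    by (rule sum.cong) (simp_all add: unitv_def)
  then have "(\<Sum>k\<le>m. A j k * of_int (unitv i k)) = A j i" for j
    using assms(1) by simp
  then show "\<forall>j\<le>m. (\<Sum>k\<le>m. A j k * of_int (unitv i k)) = of_int (v j)"
    using assms(2) by simp
qed

end

lemma has_telescoper_transfer: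
  fixes \<phi> :: "'k::field krat \<Rightarrow> 'k krat"
  assumes add: "\<And>x y. \<phi> (x + y) = \<phi> x + \<phi> y" and mult: "\<And>x y. \<phi> (x * y) = \<phi> x * \<phi> y"
    and "inj \<phi>" and Kt: "\<phi> ` Kt \<subseteq> Kt" and RF: "\<phi> ` RF m \<subseteq> RF m"
    and conj: "\<And>i g. i \<le> r \<Longrightarrow> g \<in> RF m \<Longrightarrow> \<phi> (shiftf (tau i) g) = shiftf (tau' i) (\<phi> g)"
    and f: "f \<in> RF m" and "has_telescoper m r tau f"
  shows "has_telescoper m r tau' (\<phi> f)"
proof -
  have "\<phi> 0 + \<phi> 0 = \<phi> 0 + 0"
    using add[of 0 0] by simp
  then have zero: "\<phi> 0 = 0"
    by (simp only: add_left_cancel)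
  have diff: "\<phi> (x - y) = \<phi> x - \<phi> y" for x y
    using add[of "x - y" y] by (simp add: eq_diff_eq)
  have sum: "\<phi> (sum g A) = (\<Sum>i\<in>A. \<phi> (g i))" for g :: "nat \<Rightarrow> 'k krat" and A
    by (induction A rule: infinite_finite_induct) (simp_all add: zero add)
  have iter: "(shiftf (tau 0) ^^ l) f \<in> RF m \<and>
      \<phi> ((shiftf (tau 0) ^^ l) f) = (shiftf (tau' 0) ^^ l) (\<phi> f)" for l
    by (induction l) (simp_all add: f shiftf_RF conj)
  from \<open>has_telescoper m r tau f\<close> obtain \<rho> e h where e: "\<forall>l\<le>\<rho>. e l \<in> Kt" "\<exists>l\<le>\<rho>. e l \<noteq> 0"
    and h: "\<forall>i\<in>{1..r}. h i \<in> RF m"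
    and eq: "(\<Sum>l\<le>\<rho>. e l * (shiftf (tau 0) ^^ l) f) = (\<Sum>i=1..r. shiftf (tau i) (h i) - h i)"
    unfolding has_telescoper_def summable_in_def by blast
  have "(\<Sum>l\<le>\<rho>. \<phi> (e l) * (shiftf (tau' 0) ^^ l) (\<phi> f)) = \<phi> (\<Sum>l\<le>\<rho>. e l * (shiftf (tau 0) ^^ l) f)"
    by (simp add: sum mult iter)
  also have "\<dots> = (\<Sum>i=1..r. shiftf (tau' i) (\<phi> (h i)) - \<phi> (h i))"
    unfolding eq sum diff using h by (intro sum.cong) (simp_all add: conj)
  finally have "(\<Sum>l\<le>\<rho>. \<phi> (e l) * (shiftf (tau' 0) ^^ l) (\<phi> f)) =
      (\<Sum>i=1..r. shiftf (tau' i) (\<phi> (h i)) - \<phi> (h i))" .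
  moreover have "\<forall>i\<in>{1..r}. \<phi> (h i) \<in> RF m"
    using h RF by auto
  ultimately have "summable_in m r tau' (\<Sum>l\<le>\<rho>. \<phi> (e l) * (shiftf (tau' 0) ^^ l) (\<phi> f))"
    unfolding summable_in_def by (intro exI[of _ "\<lambda>i. \<phi> (h i)"]) simp
  moreover have "\<forall>l\<le>\<rho>. \<phi> (e l) \<in> Kt"
    using e(1) Kt by auto
  moreover have "\<exists>l\<le>\<rho>. \<phi> (e l) \<noteq> 0"
    using e(2) \<open>inj \<phi>\<close> zero by (metis injD)
  ultimately show ?thesis
    unfolding has_telescoper_def by (intro exI[of _ \<rho>] exI[of _ "\<lambda>l. \<phi> (e l)"]) simp
qed

lemma has_telescoper_iff_conjugate:
  fixes \<phi> :: "'k::field krat \<Rightarrow> 'k krat"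
  assumes "bij \<phi>" and add: "\<And>x y. \<phi> (x + y) = \<phi> x + \<phi> y" and mult: "\<And>x y. \<phi> (x * y) = \<phi> x * \<phi> y"
    and Kt: "\<phi> ` Kt = Kt" and RF: "\<phi> ` RF m = RF m"
    and conj: "\<And>i g. i \<le> r \<Longrightarrow> g \<in> RF m \<Longrightarrow> \<phi> (shiftf (tau i) g) = shiftf (tau' i) (\<phi> g)"
    and f: "f \<in> RF m"
  shows "has_telescoper m r tau f \<longleftrightarrow> has_telescoper m r tau' (\<phi> f)"
proof
  assume "has_telescoper m r tau f"
  then show "has_telescoper m r tau' (\<phi> f)"
    using assms bij_is_inj by (intro has_telescoper_transfer[where \<phi> = \<phi>]) auto
next
  let ?\<psi> = "inv \<phi>"
  have inv: "?\<psi> (\<phi> x) = x" "\<phi> (?\<psi> x) = x" for x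
    using \<open>bij \<phi>\<close> by (simp_all add: bij_is_inj bij_is_surj surj_f_inv_f)
  have "?\<psi> (x + y) = ?\<psi> x + ?\<psi> y" "?\<psi> (x * y) = ?\<psi> x * ?\<psi> y" for x y
    by (metis add mult inv)+
  moreover have image: "?\<psi> ` Kt = Kt" "?\<psi> ` RF m = RF m"
    using Kt RF \<open>bij \<phi>\<close> by (metis bij_is_inj image_inv_f_f)+
  moreover have "?\<psi> (shiftf (tau' i) g) = shiftf (tau i) (?\<psi> g)" if "i \<le> r" "g \<in> RF m" for i g
    using conj[OF that(1), of "?\<psi> g"] image(2) that(2) inv by (metis imageI)
  moreover assume "has_telescoper m r tau' (\<phi> f)"
  ultimately have "has_telescoper m r tau (?\<psi> (\<phi> f))"
    using image f RF bij_is_inj[OF bij_imp_bij_inv[OF \<open>bij \<phi>\<close>]]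
    by (intro has_telescoper_transfer[where \<phi> = ?\<psi>]) auto
  then show "has_telescoper m r tau f"
    by (simp add: inv)
qed

theorem mainTheorem19:
  fixes m n r :: nat
    and tau :: "nat \<Rightarrow> nat \<Rightarrow> int"
  assumes "1 \<le> n" and "n \<le> m"
    and "1 \<le> r" and "r \<le> n"
    and inGt: "\<forall>i\<le>r. \<forall>j>n. tau i j = 0"
    and notG: "tau 0 0 \<noteq> 0"
    and inG: "\<forall>i\<in>{1..r}. tau i 0 = 0"
    and indep: "\<forall>c :: nat \<Rightarrow> int. (\<forall>j. (\<Sum>i\<le>r. c i * tau i j) = 0) \<longrightarrow> (\<forall>i\<le>r. c i = 0)"
  shows "\<exists>\<phi> :: 'k::field_char_0 krat \<Rightarrow> 'k krat.
           K_automorphism m \<phi> \<and>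
           (\<forall>g\<in>RF m. \<phi> (shiftf (tau 0) g) = shiftf (unitv 0) (\<phi> g)) \<and>
           (\<forall>i\<in>{1..r}. \<forall>g\<in>RF m. \<phi> (shiftf (tau i) g) = shiftf (unitv i) (\<phi> g)) \<and>
           (\<forall>f\<in>RF m. has_telescoper m r tau f \<longleftrightarrow> has_telescoper m r unitv (\<phi> f))"
proof -
  have "r \<le> m" and supp: "\<forall>i\<le>r. \<forall>j>m. tau i j = 0"
    using assms(2,4) inGt by auto
  moreover have indep': "\<forall>c :: nat \<Rightarrow> int. (\<forall>j. (\<Sum>i\<in>{1..r}. c i * tau i j) = 0) \<longrightarrow> (\<forall>i\<in>{1..r}. c i = 0)"
    using int_independent_subset[of "{..r}" "{1..r}" tau] indep by auto
  obtain A B where "inverse_matrices m A B" and col: "\<forall>i\<le>r. \<forall>j. A j i = of_int (tau i j)"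
    and t_preserved: "\<forall>k\<in>{1..m}. A 0 k = 0" "\<forall>k\<in>{1..m}. B 0 k = 0"
    by (rule shift_matrices_exist[OF \<open>r \<le> m\<close> notG supp inG indep'])
  then interpret inverse_matrices m A B
    by simp
  have conj: "lin_map m A (shiftf (tau i) g) = shiftf (unitv i) (lin_map m A g :: 'k krat)"
    if "i \<le> r" "g \<in> RF m" for i g
    using lin_map_shiftf_unitv[of i "tau i" g] col \<open>r \<le> m\<close> that by simp
  show ?thesis
    using K_automorphism_lin_map conj \<open>r \<le> m\<close>
      has_telescoper_iff_conjugate[where tau = tau and tau' = unitv, OF bij_lin_map lin_map_add
        lin_map_mult bij_betw_imp_surj_on[OF bij_betw_lin_map_Kt[OF t_preserved]]
        bij_betw_imp_surj_on[OF bij_betw_lin_map_RF] conj]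
    by (intro exI[of _ "lin_map m A"]) auto
qed

end
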